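(* Let $X\subseteq Y$ be FK-spaces containing $\phi$. Then $E(X)\subseteq E(Y)$ for each of $E=D_p^qS,\ D_p^qW,\ D_p^qF,\ D_p^qF^+,\ D_p^qB,\ D_p^qB^+$.
   Context: An FK-space is a vector subspace of the space $w$ of all complex sequences with a complete metrizable locally convex topology in which coordinate functionals are continuous; $X'$ is its continuous dual. $\delta^j$ has $1$ in position $j$, $0$ elsewhere; $\phi=\operatorname{span}\{\delta^j\}$. $p(n)<q(n)$ are nonnegative integer sequences with $q(n)\to\infty$. For $x\in w$, $x^{(k)}=\sum_{j=1}^kx_j\delta^j$ and $T_n(x)=\frac{1}{q(n)-p(n)}\sum_{k=p(n)+1}^{q(n)}x^{(k)}$. For an FK-space $X\supseteq\phi$: $D_p^qS(X)=\{x\in X: T_n(x)\to x \text{ in } X\}$; $D_p^qW(X)=\{x\in X: f(T_n(x))\to f(x)\ \forall f\in X'\}$; $D_p^qF^+(X)=\{x\in w: \lim_n f(T_n(x))\text{ exists }\forall f\in X'\}$; $D_p^qB^+(X)=\{x\in w:\sup_n|f(T_n(x))|<\infty\ \forall f\in X'\}$; $D_p^qF(X)=D_p^qF^+(X)\cap X$; $D_p^qB(X)=D_p^qB^+(X)\cap X$. *)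

theory Defs
  imports "HOL-Analysis.Analysis"
begin

(* Sequences in w are functions nat => complex; paper index j (>= 1) corresponds to
   Isabelle index j - 1.  An FK-space is represented by its topology T; the space
   itself is topspace T. *)

definition seq_add :: "(nat \<Rightarrow> complex) \<Rightarrow> (nat \<Rightarrow> complex) \<Rightarrow> (nat \<Rightarrow> complex)" where
  "seq_add x y = (\<lambda>i. x i + y i)"

definition seq_scale :: "complex \<Rightarrow> (nat \<Rightarrow> complex) \<Rightarrow> (nat \<Rightarrow> complex)" where
  "seq_scale c x = (\<lambda>i. c * x i)"

definition FK_space :: "(nat \<Rightarrow> complex) topology \<Rightarrow> bool" where
  "FK_space T \<longleftrightarrow>
     (\<lambda>i. 0) \<in> topspace T
   \<and> (\<forall>x\<in>topspace T. \<forall>y\<in>topspace T. seq_add x y \<in> topspace T)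
   \<and> (\<forall>c. \<forall>x\<in>topspace T. seq_scale c x \<in> topspace T)
   \<and> continuous_map (prod_topology T T) T (\<lambda>(x, y). seq_add x y)
   \<and> continuous_map (prod_topology euclidean T) T (\<lambda>(c, x). seq_scale c x)
   \<and> (\<forall>U x. openin T U \<and> x \<in> U \<longrightarrow>
        (\<exists>V. openin T V \<and> x \<in> V \<and> V \<subseteq> U \<and>
             (\<forall>a\<in>V. \<forall>b\<in>V. \<forall>t::real. 0 \<le> t \<and> t \<le> 1 \<longrightarrow>
                (\<lambda>i. complex_of_real t * a i + complex_of_real (1 - t) * b i) \<in> V)))
   \<and> completely_metrizable_space T
   \<and> (\<forall>j. continuous_map T euclidean (\<lambda>x. x j))"

definition FK_dual :: "(nat \<Rightarrow> complex) topology \<Rightarrow> ((nat \<Rightarrow> complex) \<Rightarrow> complex) set" where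
  "FK_dual T = {f. (\<forall>x\<in>topspace T. \<forall>y\<in>topspace T. f (seq_add x y) = f x + f y)
                  \<and> (\<forall>c. \<forall>x\<in>topspace T. f (seq_scale c x) = c * f x)
                  \<and> continuous_map T euclidean f}"

text \<open>phi = span of the unit sequences = finitely supported sequences.\<close>
definition phi :: "(nat \<Rightarrow> complex) set" where
  "phi = {x. finite {i. x i \<noteq> 0}}"

text \<open>k-th section x^(k) (paper coordinates 1..k = Isabelle indices 0..k-1).\<close>
definition sect :: "nat \<Rightarrow> (nat \<Rightarrow> complex) \<Rightarrow> (nat \<Rightarrow> complex)" where
  "sect k x = (\<lambda>i. if i < k then x i else 0)"

definition Tmean :: "(nat \<Rightarrow> nat) \<Rightarrow> (nat \<Rightarrow> nat) \<Rightarrow> nat \<Rightarrow> (nat \<Rightarrow> complex) \<Rightarrow> (nat \<Rightarrow> complex)" where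
  "Tmean p q n x = (\<lambda>i. (\<Sum>k\<in>{p n + 1 .. q n}. sect k x i) / of_nat (q n - p n))"

definition DS :: "(nat \<Rightarrow> nat) \<Rightarrow> (nat \<Rightarrow> nat) \<Rightarrow> (nat \<Rightarrow> complex) topology \<Rightarrow> (nat \<Rightarrow> complex) set" where
  "DS p q T = {x \<in> topspace T. limitin T (\<lambda>n. Tmean p q n x) x sequentially}"

definition DW :: "(nat \<Rightarrow> nat) \<Rightarrow> (nat \<Rightarrow> nat) \<Rightarrow> (nat \<Rightarrow> complex) topology \<Rightarrow> (nat \<Rightarrow> complex) set" where
  "DW p q T = {x \<in> topspace T. \<forall>f\<in>FK_dual T. (\<lambda>n. f (Tmean p q n x)) \<longlonglongrightarrow> f x}"

definition DFplus :: "(nat \<Rightarrow> nat) \<Rightarrow> (nat \<Rightarrow> nat) \<Rightarrow> (nat \<Rightarrow> complex) topology \<Rightarrow> (nat \<Rightarrow> complex) set" where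
  "DFplus p q T = {x. \<forall>f\<in>FK_dual T. convergent (\<lambda>n. f (Tmean p q n x))}"

definition DBplus :: "(nat \<Rightarrow> nat) \<Rightarrow> (nat \<Rightarrow> nat) \<Rightarrow> (nat \<Rightarrow> complex) topology \<Rightarrow> (nat \<Rightarrow> complex) set" where
  "DBplus p q T = {x. \<forall>f\<in>FK_dual T. bounded (range (\<lambda>n. f (Tmean p q n x)))}"

definition DF :: "(nat \<Rightarrow> nat) \<Rightarrow> (nat \<Rightarrow> nat) \<Rightarrow> (nat \<Rightarrow> complex) topology \<Rightarrow> (nat \<Rightarrow> complex) set" where
  "DF p q T = DFplus p q T \<inter> topspace T"

definition DB :: "(nat \<Rightarrow> nat) \<Rightarrow> (nat \<Rightarrow> nat) \<Rightarrow> (nat \<Rightarrow> complex) topology \<Rightarrow> (nat \<Rightarrow> complex) set" where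
  "DB p q T = DBplus p q T \<inter> topspace T"

end

theory Submission
  imports Defs "HOL-Library.Function_Algebras"
begin

(* Each of the six spaces E(X) is defined through the behaviour of the sections T_n(x)
   either in the topology of X or against the dual X'.  Hence E(X) <= E(Y) as soon as the
   inclusion X -> Y is continuous (which also restricts Y' into X').

   Continuity of the inclusion is the closed graph theorem for F-spaces, the graph being
   closed because coordinates are continuous on both spaces.  Banach's argument: by Baire's
   theorem in X, the X-closure of every Y-neighbourhood of 0 contains an X-neighbourhood of 0,
   and a successive approximation series, converging in Y because Y is complete for its
   additive uniformity, shows that this X-neighbourhood lies in the Y-neighbourhood itself. *)

lemma seq_add_eq_plus: "seq_add x y = x + y"
  by (simp add: seq_add_def fun_eq_iff)

lemma seq_scale_0_left [simp]: "seq_scale 0 x = 0"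
  by (simp add: seq_scale_def fun_eq_iff)

lemma seq_scale_0_right [simp]: "seq_scale c 0 = 0"
  by (simp add: seq_scale_def fun_eq_iff)

lemma seq_scale_minus_one: "seq_scale (-1) x = - x"
  by (simp add: seq_scale_def fun_eq_iff)

lemma continuous_map_prod_nbhds:
  assumes "continuous_map (prod_topology X Y) Z g" "openin Z W" "g (a, b) \<in> W"
    and "a \<in> topspace X" "b \<in> topspace Y"
  obtains U V where "openin X U" "openin Y V" "a \<in> U" "b \<in> V"
    "\<And>x y. x \<in> U \<Longrightarrow> y \<in> V \<Longrightarrow> g (x, y) \<in> W"
proof -
  define S where "S = {z \<in> topspace (prod_topology X Y). g z \<in> W}"
  have "openin (prod_topology X Y) S"
    unfolding S_def using assms(1,2) by (rule openin_continuous_map_preimage)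
  moreover have "(a, b) \<in> S"
    unfolding S_def using assms(3-5) by simp
  ultimately obtain U V where "openin X U" "openin Y V" "a \<in> U" "b \<in> V" "U \<times> V \<subseteq> S"
    unfolding openin_prod_topology_alt by meson
  with that show thesis
    unfolding S_def by blast
qed

lemma continuous_map_prod_diagonal_nbhd:
  assumes "continuous_map (prod_topology X X) Z g" "openin Z W" "g (a, a) \<in> W" "a \<in> topspace X"
  obtains U where "openin X U" "a \<in> U" "\<And>x y. x \<in> U \<Longrightarrow> y \<in> U \<Longrightarrow> g (x, y) \<in> W"
proof -
  obtain U V where "openin X U" "openin X V" "a \<in> U" "a \<in> V" "\<And>x y. x \<in> U \<Longrightarrow> y \<in> V \<Longrightarrow> g (x, y) \<in> W"
    using continuous_map_prod_nbhds[OF assms(1-4) assms(4)] by blast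
  then show thesis
    using that[of "U \<inter> V"] by (simp add: openin_Int)
qed

lemma metrizable_space_nbhd_sequence:
  assumes "metrizable_space X" "a \<in> topspace X"
  obtains B where "\<And>n. openin X (B n)" "\<And>n. a \<in> B n"
    "\<And>W. openin X W \<Longrightarrow> a \<in> W \<Longrightarrow> \<forall>\<^sub>F n in sequentially. B n \<subseteq> W"
proof -
  obtain M d where "Metric_space M d" and X: "X = Metric_space.mtopology M d"
    using assms(1) unfolding metrizable_space_def by blast
  interpret Metric_space M d by fact
  show thesis
  proof (rule that)
    show "openin X (mball a (inverse (Suc n)))" for n
      by (simp add: X)
    show "a \<in> mball a (inverse (Suc n))" for n
      using assms(2) by (simp add: X)
  next
    fix W assume "openin X W" "a \<in> W"
    then obtain r where r: "r > 0" "mball a r \<subseteq> W"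
      unfolding X openin_mtopology by blast
    then obtain N where N: "inverse (Suc N) < r"
      using reals_Archimedean by blast
    have "mball a (inverse (Suc n)) \<subseteq> W" if "N \<le> n" for n
    proof -
      have "inverse (Suc n) \<le> inverse (real (Suc N))"
        by (rule le_imp_inverse_le) (use that in simp_all)
      then have "inverse (Suc n) \<le> r"
        using N by linarith
      then show ?thesis
        using mball_subset_concentric r(2) by blast
    qed
    then show "\<forall>\<^sub>F n in sequentially. mball a (inverse (Suc n)) \<subseteq> W"
      unfolding eventually_sequentially by blast
  qed
qed

lemma limitin_nbhd_sequence:
  assumes "a \<in> topspace X" "\<And>W. openin X W \<Longrightarrow> a \<in> W \<Longrightarrow> \<forall>\<^sub>F n in sequentially. B n \<subseteq> W"
    and "\<And>n. r n \<in> B n"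
  shows "limitin X r a sequentially"
  unfolding limitin_def
proof (intro conjI allI impI assms(1))
  fix W assume "openin X W \<and> a \<in> W"
  then have "\<forall>\<^sub>F n in sequentially. B n \<subseteq> W"
    using assms(2) by blast
  then show "\<forall>\<^sub>F n in sequentially. r n \<in> W"
    by (rule eventually_mono) (use assms(3) in blast)
qed

lemma completely_metrizable_space_cover_interior_closure:
  fixes A :: "nat \<Rightarrow> 'a set"
  assumes "completely_metrizable_space X" "topspace X \<noteq> {}" "topspace X \<subseteq> (\<Union>n. A n)"
  obtains n where "X interior_of (X closure_of A n) \<noteq> {}"
proof (rule ccontr)
  assume "\<not> thesis"
  then have empty: "X interior_of (X closure_of A n) = {}" for n
    using that by blast
  have "X interior_of (\<Union>n. X closure_of A n) = {}"
  proof (rule Baire_category_alt)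
    show "completely_metrizable_space X \<or> locally_compact_space X \<and> regular_space X"
      using assms(1) ..
  qed (use empty in auto)
  moreover have "(\<Union>n. X closure_of A n) = topspace X"
  proof
    show "(\<Union>n. X closure_of A n) \<subseteq> topspace X"
      by (simp add: UN_least closure_of_subset_topspace)
    show "topspace X \<subseteq> (\<Union>n. X closure_of A n)"
      using assms(3) closure_of_subset_Int[of X] by blast
  qed
  ultimately show False
    using assms(2) by simp
qed

definition group_Cauchy :: "'a::group_add topology \<Rightarrow> (nat \<Rightarrow> 'a) \<Rightarrow> bool" where
  "group_Cauchy T u \<longleftrightarrow>
     (\<forall>W. openin T W \<and> 0 \<in> W \<longrightarrow> (\<exists>N. \<forall>m n. N \<le> m \<longrightarrow> m \<le> n \<longrightarrow> u n - u m \<in> W))"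

lemma telescoping_mem_nested:
  fixes a :: "nat \<Rightarrow> 'a::ab_group_add"
  assumes add: "\<And>n x y. x \<in> V (Suc n) \<Longrightarrow> y \<in> V (Suc n) \<Longrightarrow> x + y \<in> V n"
    and zero: "\<And>n. 0 \<in> V n"
    and step: "\<And>k. a (Suc k) - a k \<in> V (Suc k)"
    and "m \<le> n"
  shows "a n - a m \<in> V m"
proof -
  have "a (m + k) - a m + w \<in> V m" if "w \<in> V (m + k)" for k w
    using that
  proof (induction k arbitrary: w)
    case 0
    then show ?case by simp
  next
    case (Suc k)
    have "a (Suc (m + k)) - a (m + k) + w \<in> V (m + k)"
      using add[OF step] Suc.prems by simp
    then have "a (m + k) - a m + (a (Suc (m + k)) - a (m + k) + w) \<in> V m"
      by (rule Suc.IH)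
    then show ?case
      by (simp add: algebra_simps)
  qed
  from this[of 0 "n - m"] show ?thesis
    using zero \<open>m \<le> n\<close> by simp
qed

locale F_space =
  fixes T :: "(nat \<Rightarrow> complex) topology"
  assumes zero_in_topspace [simp]: "0 \<in> topspace T"
    and add_continuous: "continuous_map (prod_topology T T) T (\<lambda>(x, y). x + y)"
    and scale_continuous: "continuous_map (prod_topology euclidean T) T (\<lambda>(c, x). seq_scale c x)"
    and completely_metrizable: "completely_metrizable_space T"

lemma FK_space_imp_F_space: "FK_space T \<Longrightarrow> F_space T"
  unfolding FK_space_def F_space_def seq_add_eq_plus zero_fun_def by blast

context F_space
begin

lemma continuous_map_add:
  "continuous_map Z T f \<Longrightarrow> continuous_map Z T g \<Longrightarrow> continuous_map Z T (\<lambda>z. f z + g z)"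
  using continuous_map_compose[OF continuous_map_pairedI add_continuous] by (simp add: o_def)

lemma continuous_map_scale:
  "continuous_map Z euclidean c \<Longrightarrow> continuous_map Z T f \<Longrightarrow> continuous_map Z T (\<lambda>z. seq_scale (c z) (f z))"
  using continuous_map_compose[OF continuous_map_pairedI scale_continuous] by (simp add: o_def)

lemma continuous_map_uminus:
  "continuous_map Z T f \<Longrightarrow> continuous_map Z T (\<lambda>z. - f z)"
  using continuous_map_scale[of Z "\<lambda>z. -1" f] by (simp add: seq_scale_minus_one)

lemma continuous_map_diff:
  "continuous_map Z T f \<Longrightarrow> continuous_map Z T g \<Longrightarrow> continuous_map Z T (\<lambda>z. f z - g z)"
  unfolding diff_conv_add_uminus by (intro continuous_map_add continuous_map_uminus)

lemma add_in_topspace [simp]: "x \<in> topspace T \<Longrightarrow> y \<in> topspace T \<Longrightarrow> x + y \<in> topspace T"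
  using funcset_mem[OF continuous_map_funspace[OF add_continuous], of "(x, y)"] by simp

lemma scale_in_topspace [simp]: "x \<in> topspace T \<Longrightarrow> seq_scale c x \<in> topspace T"
  using funcset_mem[OF continuous_map_funspace[OF scale_continuous], of "(c, x)"] by simp

lemma uminus_in_topspace [simp]: "x \<in> topspace T \<Longrightarrow> - x \<in> topspace T"
  using scale_in_topspace[of x "-1"] by (simp add: seq_scale_minus_one)

lemma diff_in_topspace [simp]: "x \<in> topspace T \<Longrightarrow> y \<in> topspace T \<Longrightarrow> x - y \<in> topspace T"
  using add_in_topspace[of x "- y"] by simp

lemma zero_nbhd_add:
  assumes "openin T W" "0 \<in> W"
  obtains U where "openin T U" "0 \<in> U" "\<And>x y. x \<in> U \<Longrightarrow> y \<in> U \<Longrightarrow> x + y \<in> W"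
proof -
  have "(\<lambda>(x, y). x + y) (0, 0) \<in> W"
    using assms(2) by simp
  from continuous_map_prod_diagonal_nbhd[OF add_continuous assms(1) this zero_in_topspace] that
  show thesis
    by (metis case_prod_conv)
qed

lemma zero_nbhd_diff:
  assumes "openin T W" "0 \<in> W"
  obtains U where "openin T U" "0 \<in> U" "\<And>x y. x \<in> U \<Longrightarrow> y \<in> U \<Longrightarrow> x - y \<in> W"
proof -
  have "continuous_map (prod_topology T T) T (\<lambda>(x, y). x - y)"
    unfolding case_prod_beta by (intro continuous_map_diff continuous_map_fst continuous_map_snd)
  moreover have "(\<lambda>(x, y). x - y) (0, 0) \<in> W"
    using assms(2) by simp
  ultimately show thesis
    using continuous_map_prod_diagonal_nbhd[OF _ assms(1) _ zero_in_topspace] that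
    by (metis case_prod_conv)
qed

lemma absorbing:
  assumes "openin T W" "0 \<in> W" "x \<in> topspace T"
  obtains n where "seq_scale (1 / of_nat (Suc n)) x \<in> W"
proof -
  have "continuous_map euclidean T (\<lambda>c. seq_scale c x)"
    using assms(3) by (intro continuous_map_scale) simp_all
  from openin_continuous_map_preimage[OF this assms(1)]
  have "open {c. seq_scale c x \<in> W}"
    by simp
  moreover have "seq_scale 0 x = 0"
    by simp
  ultimately obtain e where "e > 0" "ball 0 e \<subseteq> {c. seq_scale c x \<in> W}"
    using assms(2) open_contains_ball_eq by (metis mem_Collect_eq)
  moreover obtain n where "inverse (Suc n) < e"
    using \<open>e > 0\<close> reals_Archimedean by blast
  moreover have "norm (1 / of_nat (Suc n) :: complex) = inverse (Suc n)"
    by (simp only: norm_divide norm_one norm_of_nat inverse_eq_divide)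
  ultimately have "1 / of_nat (Suc n) \<in> ball (0::complex) e"
    by (simp add: dist_norm)
  with \<open>ball 0 e \<subseteq> _\<close> have "seq_scale (1 / of_nat (Suc n)) x \<in> W"
    by blast
  then show thesis
    using that by blast
qed

lemma zero_nbhd_closure_differences:
  assumes "a \<in> T interior_of (T closure_of A)" "c \<noteq> 0"
  obtains U where "openin T U" "0 \<in> U"
    "U \<subseteq> T closure_of ((\<lambda>(p, q). seq_scale c (p - q)) ` (A \<times> A))"
proof -
  define h where "h = (\<lambda>(p, q). seq_scale c (p - q))"
  have "continuous_map (prod_topology T T) T h"
    unfolding h_def case_prod_beta
    by (intro continuous_map_scale continuous_map_diff continuous_map_fst continuous_map_snd) simp
  then have h_closure: "h ` ((T closure_of A) \<times> (T closure_of A)) \<subseteq> T closure_of (h ` (A \<times> A))"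
    using continuous_map_image_closure_subset closure_of_Times by metis
  define Op where "Op = T interior_of (T closure_of A)"
  define U where "U = {u \<in> topspace T. seq_scale (1 / c) u + a \<in> Op}"
  have "a \<in> topspace T"
    using assms(1) interior_of_subset_topspace[of T] by (rule subsetD[rotated])
  then have "continuous_map T T (\<lambda>u. seq_scale (1 / c) u + a)"
    by (intro continuous_map_add continuous_map_scale) simp_all
  from openin_continuous_map_preimage[OF this] have "openin T U"
    unfolding U_def Op_def by simp
  moreover have "0 \<in> U"
    using assms(1) by (simp add: U_def Op_def)
  moreover have "U \<subseteq> T closure_of (h ` (A \<times> A))"
  proof
    fix u assume u: "u \<in> U"
    have "Op \<subseteq> T closure_of A"
      unfolding Op_def by (rule interior_of_subset)
    then have "(seq_scale (1 / c) u + a, a) \<in> (T closure_of A) \<times> (T closure_of A)"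
      using u assms(1) unfolding U_def Op_def by blast
    moreover have "h (seq_scale (1 / c) u + a, a) = u"
      using assms(2) by (simp add: h_def seq_scale_def fun_eq_iff)
    ultimately show "u \<in> T closure_of (h ` (A \<times> A))"
      using h_closure by force
  qed
  ultimately show thesis
    using that h_def by blast
qed

lemma nested_zero_nbhds:
  assumes "openin T V" "0 \<in> V"
  obtains Vs where "Vs 0 = V" "\<And>n. openin T (Vs n)" "\<And>n. 0 \<in> Vs n"
    "\<And>n x y. x \<in> Vs (Suc n) \<Longrightarrow> y \<in> Vs (Suc n) \<Longrightarrow> x + y \<in> Vs n"
    "\<And>W. openin T W \<Longrightarrow> 0 \<in> W \<Longrightarrow> \<forall>\<^sub>F n in sequentially. Vs n \<subseteq> W"
proof -
  obtain B where B: "\<And>n. openin T (B n)" "\<And>n. 0 \<in> B n"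
    "\<And>W. openin T W \<Longrightarrow> 0 \<in> W \<Longrightarrow> \<forall>\<^sub>F n in sequentially. B n \<subseteq> W"
    using metrizable_space_nbhd_sequence[OF completely_metrizable_imp_metrizable_space
        [OF completely_metrizable] zero_in_topspace] by blast
  have "\<exists>Vs. \<forall>n. (openin T (Vs n) \<and> 0 \<in> Vs n \<and> (n = 0 \<longrightarrow> Vs n = V)) \<and>
      (\<forall>x\<in>Vs (Suc n). \<forall>y\<in>Vs (Suc n). x + y \<in> Vs n) \<and> Vs (Suc n) \<subseteq> B n"
  proof (rule dependent_nat_choice)
    show "\<exists>W. openin T W \<and> 0 \<in> W \<and> (0 = 0 \<longrightarrow> W = V)"
      using assms by blast
  next
    fix W and n :: nat assume "openin T W \<and> 0 \<in> W \<and> (n = 0 \<longrightarrow> W = V)"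
    then obtain U where U: "openin T U" "0 \<in> U" "\<And>x y. x \<in> U \<Longrightarrow> y \<in> U \<Longrightarrow> x + y \<in> W"
      using zero_nbhd_add by blast
    have "openin T (U \<inter> B n)" "0 \<in> U \<inter> B n"
      using U B by auto
    with U(3) show "\<exists>W'. (openin T W' \<and> 0 \<in> W' \<and> (Suc n = 0 \<longrightarrow> W' = V)) \<and>
        (\<forall>x\<in>W'. \<forall>y\<in>W'. x + y \<in> W) \<and> W' \<subseteq> B n"
      by (intro exI[of _ "U \<inter> B n"]) auto
  qed
  then obtain Vs where Vs: "\<And>n. openin T (Vs n)" "\<And>n. 0 \<in> Vs n" "Vs 0 = V"
    "\<And>n x y. x \<in> Vs (Suc n) \<Longrightarrow> y \<in> Vs (Suc n) \<Longrightarrow> x + y \<in> Vs n" "\<And>n. Vs (Suc n) \<subseteq> B n"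
    by metis
  have "\<forall>\<^sub>F n in sequentially. Vs n \<subseteq> W" if "openin T W" "0 \<in> W" for W
  proof -
    have "\<forall>\<^sub>F n in sequentially. Vs (Suc n) \<subseteq> W"
      using B(3)[OF that] by (rule eventually_mono) (use Vs(5) in blast)
    then show ?thesis
      using eventually_sequentially_Suc[of "\<lambda>n. Vs n \<subseteq> W"] by simp
  qed
  with Vs(1-4) show thesis
    using that by blast
qed

lemma successive_approximation_nbhds:
  assumes "\<And>n. openin T (U n)" "\<And>n. 0 \<in> U n" "\<And>n. U n \<subseteq> T closure_of D n"
    and "\<And>n. openin T (B n)" "\<And>n. x \<in> B n" and "x \<in> U 0"
  obtains a where "a 0 = 0" "\<And>n. a n \<in> topspace T" "\<And>n. a (Suc n) - a n \<in> D n"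
    "\<And>n. a (Suc n) \<in> B n"
proof -
  have x: "x \<in> topspace T"
    using assms(1,6) openin_subset by blast
  have "\<exists>a. \<forall>n. (a n \<in> topspace T \<and> x - a n \<in> U n \<and> (n = 0 \<longrightarrow> a n = 0)) \<and>
      a (Suc n) - a n \<in> D n \<and> a (Suc n) \<in> B n"
  proof (rule dependent_nat_choice)
    show "\<exists>y. y \<in> topspace T \<and> x - y \<in> U 0 \<and> (0 = 0 \<longrightarrow> y = 0)"
      using assms(6) by simp
  next
    fix y and n :: nat assume y: "y \<in> topspace T \<and> x - y \<in> U n \<and> (n = 0 \<longrightarrow> y = 0)"
    define Nb where "Nb = {v \<in> topspace T. x - y - v \<in> U (Suc n)} \<inter> {v \<in> topspace T. y + v \<in> B n}"
    have "continuous_map T T (\<lambda>v. x - y - v)" "continuous_map T T (\<lambda>v. y + v)"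
      using x y by (intro continuous_map_diff continuous_map_add; simp)+
    from openin_continuous_map_preimage[OF this(1) assms(1)]
      openin_continuous_map_preimage[OF this(2) assms(4)]
    have "openin T Nb"
      unfolding Nb_def by (rule openin_Int)
    moreover have "x - y \<in> Nb"
      unfolding Nb_def using x y assms(2,5) by simp
    moreover have "x - y \<in> T closure_of D n"
      using y assms(3) by blast
    ultimately obtain v where "v \<in> D n" "v \<in> Nb"
      unfolding in_closure_of by blast
    then show "\<exists>y'. (y' \<in> topspace T \<and> x - y' \<in> U (Suc n) \<and> (Suc n = 0 \<longrightarrow> y' = 0)) \<and>
        y' - y \<in> D n \<and> y' \<in> B n"
      using y by (intro exI[of _ "y + v"]) (simp add: Nb_def algebra_simps)
  qed
  then show thesis
    using that by metis
qed

lemma successive_approximation: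
  assumes "\<And>n. openin T (U n)" "\<And>n. 0 \<in> U n" "\<And>n. U n \<subseteq> T closure_of D n"
    and "x \<in> U 0"
  obtains a where "a 0 = 0" "\<And>n. a n \<in> topspace T" "\<And>n. a (Suc n) - a n \<in> D n"
    "limitin T a x sequentially"
proof -
  have x: "x \<in> topspace T"
    using assms(1,4) openin_subset by blast
  obtain B where B: "\<And>n. openin T (B n)" "\<And>n. x \<in> B n"
    "\<And>W. openin T W \<Longrightarrow> x \<in> W \<Longrightarrow> \<forall>\<^sub>F n in sequentially. B n \<subseteq> W"
    using metrizable_space_nbhd_sequence[OF
        completely_metrizable_imp_metrizable_space[OF completely_metrizable] x] by blast
  obtain a where a: "a 0 = 0" "\<And>n. a n \<in> topspace T" "\<And>n. a (Suc n) - a n \<in> D n"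
    "\<And>n. a (Suc n) \<in> B n"
    using successive_approximation_nbhds[of U D B x] assms B(1,2) by blast
  have "limitin T (\<lambda>n. a (Suc n)) x sequentially"
    by (rule limitin_nbhd_sequence[OF x B(3) a(4)])
  then have "limitin T a x sequentially"
    using limitin_sequentially_offset_rev[of T a 1 x] by simp
  with a(1-3) show thesis
    by (rule that)
qed

end

(* The complete metric of an F-space need not be translation invariant, so a Cauchy sequence
   of the additive uniformity need not be metrically Cauchy; following Klee, Baire's theorem
   produces a translate of it that is. *)
locale F_space_metric = F_space T + Metric_space M d
  for T :: "(nat \<Rightarrow> complex) topology" and M :: "(nat \<Rightarrow> complex) set" and d +
  assumes mtopology_eq: "T = mtopology"
    and complete: "mcomplete"
begin

lemma topspace_eq [simp]: "topspace T = M"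
  by (simp add: mtopology_eq)

lemmas in_mspace [simp] = zero_in_topspace[unfolded topspace_eq]
  add_in_topspace[unfolded topspace_eq] diff_in_topspace[unfolded topspace_eq]

lemma translates_stay_near:
  assumes u: "\<And>n. u n \<in> M" "group_Cauchy T u" and "c \<in> M" "e > 0"
  obtains U K0 where "openin T U" "c \<in> U"
    "\<And>y K j. y + u K \<in> U \<Longrightarrow> K0 \<le> K \<Longrightarrow> K \<le> j \<Longrightarrow> y + u j \<in> mball c e"
proof -
  have "(\<lambda>(x, y). x + y) (c, 0) \<in> mball c e"
    using assms(3,4) by simp
  then obtain U V where UV: "openin T U" "openin T V" "c \<in> U" "0 \<in> V"
    "\<And>x y. x \<in> U \<Longrightarrow> y \<in> V \<Longrightarrow> x + y \<in> mball c e"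
    using continuous_map_prod_nbhds[OF add_continuous, of "mball c e" c 0] assms(3)
    by (auto simp: mtopology_eq)
  then obtain K0 where K0: "\<And>m n. K0 \<le> m \<Longrightarrow> m \<le> n \<Longrightarrow> u n - u m \<in> V"
    using u(2) unfolding group_Cauchy_def by blast
  have "y + u j \<in> mball c e" if "y + u K \<in> U" "K0 \<le> K" "K \<le> j" for y K j
  proof -
    have "(y + u K) + (u j - u K) \<in> mball c e"
      using UV(5) K0 that by blast
    then show ?thesis
      by simp
  qed
  with UV(1,3) show thesis
    by (rule that)
qed

lemma translate_stable_nbhd:
  assumes u: "\<And>n. u n \<in> M" "group_Cauchy T u"
    and Op: "openin T Op" "y0 \<in> Op" and "e > 0"
  obtains Nb N where "openin T Nb" "Nb \<inter> Op \<noteq> {}"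
    "\<And>y m n. y \<in> Nb \<Longrightarrow> N \<le> m \<Longrightarrow> N \<le> n \<Longrightarrow> d (y + u m) (y + u n) < e"
proof -
  have y0: "y0 \<in> M"
    using Op openin_subset by fastforce
  define W where "W = {w \<in> M. y0 - w \<in> Op}"
  have "continuous_map T T (\<lambda>w. y0 - w)"
    using y0 by (intro continuous_map_diff) simp_all
  from openin_continuous_map_preimage[OF this Op(1)] have "openin T W"
    by (simp add: W_def)
  moreover have "0 \<in> W"
    unfolding W_def using Op(2) by simp
  ultimately obtain N1 where N1: "\<And>m n. N1 \<le> m \<Longrightarrow> m \<le> n \<Longrightarrow> u n - u m \<in> W"
    using u(2) unfolding group_Cauchy_def by blast
  define c where "c = y0 + u N1"
  have "c \<in> M" "e / 2 > 0"
    unfolding c_def using y0 u(1) \<open>e > 0\<close> by simp_all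
  then obtain U K0 where U: "openin T U" "c \<in> U"
    "\<And>y K j. y + u K \<in> U \<Longrightarrow> K0 \<le> K \<Longrightarrow> K \<le> j \<Longrightarrow> y + u j \<in> mball c (e / 2)"
    using translates_stay_near[OF u] by blast
  define K where "K = max N1 K0"
  \<comment> \<open>The point y0 - (u K - u N1) of Op has K-th translate c.\<close>
  define Nb where "Nb = {y \<in> M. y + u K \<in> U}"
  have "continuous_map T T (\<lambda>y. y + u K)"
    using u(1) by (intro continuous_map_add) simp_all
  from openin_continuous_map_preimage[OF this U(1)] have "openin T Nb"
    by (simp add: Nb_def)
  moreover have "y0 - (u K - u N1) \<in> Nb \<inter> Op"
    using N1[of N1 K] y0 u(1) U(2) unfolding Nb_def W_def K_def by (auto simp: c_def)
  moreover have "d (y + u m) (y + u n) < e" if "y \<in> Nb" "K \<le> m" "K \<le> n" for y m n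
  proof -
    have "y + u m \<in> mball c (e / 2)" "y + u n \<in> mball c (e / 2)"
      using U(3) that unfolding Nb_def K_def by auto
    then have "d (y + u m) c < e / 2" "d c (y + u n) < e / 2"
      "d (y + u m) (y + u n) \<le> d (y + u m) c + d c (y + u n)"
      using \<open>c \<in> M\<close> commute triangle[of "y + u m" c "y + u n"] by auto
    then show ?thesis
      by linarith
  qed
  ultimately show thesis
    using that by blast
qed

lemma translate_MCauchy:
  assumes "\<And>n. u n \<in> M" "group_Cauchy T u"
  obtains y where "y \<in> M" "MCauchy (\<lambda>n. y + u n)"
proof -
  define G where "G e = \<Union>{Nb. openin T Nb \<and>
      (\<exists>N. \<forall>y\<in>Nb. \<forall>m\<ge>N. \<forall>n\<ge>N. d (y + u m) (y + u n) < e)}" for e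
  have "openin T (G e)" for e
    unfolding G_def by (rule openin_Union) blast
  moreover have "T closure_of G e = topspace T" if "e > 0" for e
    unfolding dense_intersects_open
  proof (intro allI impI)
    fix Op assume "openin T Op \<and> Op \<noteq> {}"
    then obtain y0 where "openin T Op" "y0 \<in> Op"
      by blast
    with translate_stable_nbhd[OF assms this \<open>e > 0\<close>] obtain Nb N where Nb: "openin T Nb" "Nb \<inter> Op \<noteq> {}"
      "\<And>y m n. y \<in> Nb \<Longrightarrow> N \<le> m \<Longrightarrow> N \<le> n \<Longrightarrow> d (y + u m) (y + u n) < e"
      by metis
    then have "Nb \<subseteq> G e"
      unfolding G_def by blast
    then show "G e \<inter> Op \<noteq> {}"
      using Nb(2) by blast
  qed
  ultimately have "T closure_of (\<Inter>k. G (inverse (Suc k))) = topspace T"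
    using completely_metrizable by (intro Baire_category) auto
  then have "(\<Inter>k. G (inverse (Suc k))) \<noteq> {}"
    using zero_in_topspace by (metis closure_of_empty empty_iff)
  then obtain y where y: "\<And>k. y \<in> G (inverse (Suc k))"
    by blast
  show thesis
  proof (rule that)
    show "y \<in> M"
      using y[of 0] \<open>\<And>e. openin T (G e)\<close> openin_subset by fastforce
    show "MCauchy (\<lambda>n. y + u n)"
      unfolding MCauchy_def
    proof (intro conjI allI impI)
      show "range (\<lambda>n. y + u n) \<subseteq> M"
        using \<open>y \<in> M\<close> assms(1) by auto
      fix \<epsilon> :: real assume "\<epsilon> > 0"
      then obtain k where "inverse (Suc k) < \<epsilon>"
        using reals_Archimedean by blast
      moreover obtain N where "\<forall>m\<ge>N. \<forall>n\<ge>N. d (y + u m) (y + u n) < inverse (Suc k)"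
        using y[of k] unfolding G_def by blast
      ultimately show "\<exists>N. \<forall>m n. N \<le> m \<longrightarrow> N \<le> n \<longrightarrow> d (y + u m) (y + u n) < \<epsilon>"
        by force
    qed
  qed
qed

end

lemma (in F_space) group_Cauchy_convergent:
  assumes "\<And>n. u n \<in> topspace T" "group_Cauchy T u"
  obtains l where "limitin T u l sequentially"
proof -
  obtain M d where "Metric_space M d" "Metric_space.mcomplete M d" "T = Metric_space.mtopology M d"
    using completely_metrizable unfolding completely_metrizable_space_def by blast
  then interpret F_space_metric T M d
    by (intro F_space_metric.intro F_space_metric_axioms.intro F_space_axioms)
  obtain y where "y \<in> M" "MCauchy (\<lambda>n. y + u n)"
    using translate_MCauchy assms by auto
  then obtain l where "limitin T (\<lambda>n. y + u n) l sequentially"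
    using complete unfolding mcomplete_def mtopology_eq by blast
  moreover have "continuous_map T T (\<lambda>w. w - y)"
    using \<open>y \<in> M\<close> by (intro continuous_map_diff) simp_all
  ultimately have "limitin T (\<lambda>n. y + u n - y) (l - y) sequentially"
    using continuous_map_limit by (fastforce simp: o_def)
  then show thesis
    using that by simp
qed

locale F_space_inclusion = X: F_space TX + Y: F_space TY for TX TY +
  assumes topspace_subset: "topspace TX \<subseteq> topspace TY"
begin

lemma closure_contains_zero_nbhd:
  assumes "openin TY W" "0 \<in> W"
  obtains U where "openin TX U" "0 \<in> U" "U \<subseteq> TX closure_of W"
proof -
  obtain W' where W': "openin TY W'" "0 \<in> W'" "\<And>x y. x \<in> W' \<Longrightarrow> y \<in> W' \<Longrightarrow> x - y \<in> W"
    using Y.zero_nbhd_diff assms by blast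
  define A where "A n = {x \<in> topspace TX. seq_scale (1 / of_nat (Suc n)) x \<in> W'}" for n
  have "topspace TX \<subseteq> (\<Union>n. A n)"
  proof
    fix x assume x: "x \<in> topspace TX"
    then obtain n where "seq_scale (1 / of_nat (Suc n)) x \<in> W'"
      using Y.absorbing[OF W'(1,2)] topspace_subset by blast
    then show "x \<in> (\<Union>n. A n)"
      using x by (auto simp: A_def)
  qed
  then obtain n where "TX interior_of (TX closure_of A n) \<noteq> {}"
    using completely_metrizable_space_cover_interior_closure[OF X.completely_metrizable]
      X.zero_in_topspace by blast
  then obtain a where a: "a \<in> TX interior_of (TX closure_of A n)"
    by blast
  have "(1 / of_nat (Suc n) :: complex) \<noteq> 0"
    using of_nat_neq_0[of n, where ?'a = complex] by simp
  with a obtain U where U: "openin TX U" "0 \<in> U"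
    "U \<subseteq> TX closure_of ((\<lambda>(p, q). seq_scale (1 / of_nat (Suc n)) (p - q)) ` (A n \<times> A n))"
    using X.zero_nbhd_closure_differences by blast
  have "(\<lambda>(p, q). seq_scale (1 / of_nat (Suc n)) (p - q)) ` (A n \<times> A n) \<subseteq> W"
  proof clarify
    fix p q assume "p \<in> A n" "q \<in> A n"
    moreover have "seq_scale c (p - q) = seq_scale c p - seq_scale c q" for c
      by (simp add: seq_scale_def fun_eq_iff algebra_simps)
    ultimately show "seq_scale (1 / of_nat (Suc n)) (p - q) \<in> W"
      using W'(3) by (simp add: A_def)
  qed
  then have "U \<subseteq> TX closure_of W"
    using U(3) closure_of_mono by blast
  with U(1,2) show thesis
    by (rule that)
qed

end

locale F_space_closed_inclusion = F_space_inclusion +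
  assumes graph_closed:
    "\<And>s x t. limitin TX s x sequentially \<Longrightarrow> limitin TY s t sequentially \<Longrightarrow> t = x"
begin

lemma limitin_of_group_Cauchy:
  assumes "limitin TX a x sequentially" "\<And>n. a n \<in> topspace TX" "group_Cauchy TY a"
  shows "limitin TY a x sequentially"
proof -
  have "\<And>n. a n \<in> topspace TY"
    using assms(2) topspace_subset by blast
  then obtain t where "limitin TY a t sequentially"
    by (rule Y.group_Cauchy_convergent[OF _ assms(3)])
  with graph_closed[OF assms(1) this] show ?thesis
    by simp
qed

lemma limitin_mem_nested_zero_nbhds:
  assumes Vs: "\<And>n. openin TY (Vs n)" "\<And>n. 0 \<in> Vs n"
      "\<And>n x y. x \<in> Vs (Suc n) \<Longrightarrow> y \<in> Vs (Suc n) \<Longrightarrow> x + y \<in> Vs n"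
      "\<And>W. openin TY W \<Longrightarrow> 0 \<in> W \<Longrightarrow> \<forall>\<^sub>F n in sequentially. Vs n \<subseteq> W"
    and a: "a 0 = 0" "\<And>n. a n \<in> topspace TX" "\<And>n. a (Suc n) - a n \<in> Vs (Suc (Suc n))"
      "limitin TX a x sequentially"
  shows "x \<in> Vs 0"
proof -
  have a_diff: "a n - a m \<in> Vs (Suc m)" if "m \<le> n" for m n
    by (rule telescoping_mem_nested[where V = "\<lambda>k. Vs (Suc k)", OF Vs(3) Vs(2) a(3) that])
  have "group_Cauchy TY a"
    unfolding group_Cauchy_def
  proof (intro allI impI)
    fix W assume "openin TY W \<and> 0 \<in> W"
    then have "\<forall>\<^sub>F n in sequentially. Vs n \<subseteq> W"
      using Vs(4) by blast
    then obtain N where N: "\<And>n. N \<le> n \<Longrightarrow> Vs n \<subseteq> W"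
      unfolding eventually_sequentially by blast
    show "\<exists>N. \<forall>m n. N \<le> m \<longrightarrow> m \<le> n \<longrightarrow> a n - a m \<in> W"
    proof (intro exI allI impI)
      fix m n assume "N \<le> m" "m \<le> n"
      then show "a n - a m \<in> W"
        using a_diff[of m n] N[of "Suc m"] by auto
    qed
  qed
  with a(4,2) have lim: "limitin TY a x sequentially"
    by (rule limitin_of_group_Cauchy)
  have "x \<in> topspace TY"
    using limitin_topspace[OF lim] .
  then have "continuous_map TY TY (\<lambda>y. x - y)"
    by (intro Y.continuous_map_diff) simp_all
  from openin_continuous_map_preimage[OF this Vs(1)]
  have "openin TY {y \<in> topspace TY. x - y \<in> Vs (Suc 0)}" .
  moreover have "x \<in> {y \<in> topspace TY. x - y \<in> Vs (Suc 0)}"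
    using Vs(2) \<open>x \<in> topspace TY\<close> by simp
  ultimately obtain N where "a N \<in> {y \<in> topspace TY. x - y \<in> Vs (Suc 0)}"
    using limitin_sequentially[THEN iffD1, OF lim] by blast
  then have "x - a N \<in> Vs (Suc 0)"
    by simp
  moreover have "a N \<in> Vs (Suc 0)"
    using a_diff[of 0 N] a(1) by simp
  ultimately have "(x - a N) + a N \<in> Vs 0"
    by (rule Vs(3))
  then show ?thesis
    by simp
qed

lemma zero_nbhd_inclusion:
  assumes "openin TY V" "0 \<in> V"
  obtains U where "openin TX U" "0 \<in> U" "U \<subseteq> V"
proof -
  obtain Vs where Vs: "Vs 0 = V" "\<And>n. openin TY (Vs n)" "\<And>n. 0 \<in> Vs n"
      "\<And>n x y. x \<in> Vs (Suc n) \<Longrightarrow> y \<in> Vs (Suc n) \<Longrightarrow> x + y \<in> Vs n"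
      "\<And>W. openin TY W \<Longrightarrow> 0 \<in> W \<Longrightarrow> \<forall>\<^sub>F n in sequentially. Vs n \<subseteq> W"
    using Y.nested_zero_nbhds[OF assms] by blast
  have "\<forall>n. \<exists>U. openin TX U \<and> 0 \<in> U \<and> U \<subseteq> TX closure_of Vs (Suc (Suc n))"
  proof
    fix n
    show "\<exists>U. openin TX U \<and> 0 \<in> U \<and> U \<subseteq> TX closure_of Vs (Suc (Suc n))"
      by (rule closure_contains_zero_nbhd[OF Vs(2) Vs(3)]) blast
  qed
  then obtain Us where "\<forall>n. openin TX (Us n) \<and> 0 \<in> Us n \<and>
      Us n \<subseteq> TX closure_of Vs (Suc (Suc n))"
    by (rule choice[THEN exE])
  then have Us: "\<And>n. openin TX (Us n)" "\<And>n. 0 \<in> Us n"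
      "\<And>n. Us n \<subseteq> TX closure_of Vs (Suc (Suc n))"
    by simp_all
  have "x \<in> V" if x: "x \<in> Us 0" for x
  proof -
    obtain a where a: "a 0 = 0" "\<And>n. a n \<in> topspace TX"
      "\<And>n. a (Suc n) - a n \<in> Vs (Suc (Suc n))" "limitin TX a x sequentially"
      using X.successive_approximation[of Us "\<lambda>n. Vs (Suc (Suc n))" x] Us x by blast
    from limitin_mem_nested_zero_nbhds[OF Vs(2-5) a] show ?thesis
      using Vs(1) by simp
  qed
  then have "Us 0 \<subseteq> V"
    by blast
  with Us(1,2) show thesis
    by (rule that)
qed

lemma continuous_map_inclusion: "continuous_map TX TY (\<lambda>x. x)"
  unfolding continuous_map_def
proof (intro conjI allI impI)
  show "(\<lambda>x. x) \<in> topspace TX \<rightarrow> topspace TY"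
    using topspace_subset by auto
  fix U assume U: "openin TY U"
  show "openin TX {x \<in> topspace TX. x \<in> U}"
  proof (subst openin_subopen, intro ballI)
    fix x0 assume x0: "x0 \<in> {x \<in> topspace TX. x \<in> U}"
    then have x0X: "x0 \<in> topspace TX" and x0Y: "x0 \<in> topspace TY"
      using topspace_subset by auto
    have "continuous_map TY TY (\<lambda>v. x0 + v)"
      using x0Y by (intro Y.continuous_map_add) simp_all
    from openin_continuous_map_preimage[OF this U]
    have "openin TY {v \<in> topspace TY. x0 + v \<in> U}" .
    moreover have "0 \<in> {v \<in> topspace TY. x0 + v \<in> U}"
      using x0 by simp
    ultimately obtain U0 where U0: "openin TX U0" "0 \<in> U0" "U0 \<subseteq> {v \<in> topspace TY. x0 + v \<in> U}"
      using zero_nbhd_inclusion by blast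
    have "continuous_map TX TX (\<lambda>u. u - x0)"
      using x0X by (intro X.continuous_map_diff) simp_all
    from openin_continuous_map_preimage[OF this U0(1)]
    have "openin TX {u \<in> topspace TX. u - x0 \<in> U0}" .
    moreover have "x0 \<in> {u \<in> topspace TX. u - x0 \<in> U0}"
      using x0X U0(2) by simp
    moreover have "{u \<in> topspace TX. u - x0 \<in> U0} \<subseteq> {x \<in> topspace TX. x \<in> U}"
      using U0(3) by force
    ultimately show "\<exists>S. openin TX S \<and> x0 \<in> S \<and> S \<subseteq> {x \<in> topspace TX. x \<in> U}"
      by blast
  qed
qed

end

lemma coordinatewise_limits_eq:
  fixes s :: "nat \<Rightarrow> 'i \<Rightarrow> 'a::t2_space"
  assumes "\<And>j. continuous_map X euclidean (\<lambda>x. x j)" "\<And>j. continuous_map Y euclidean (\<lambda>x. x j)"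
    and "limitin X s x sequentially" "limitin Y s t sequentially"
  shows "t = x"
proof
  fix j
  have "(\<lambda>n. s n j) \<longlonglongrightarrow> x j"
    using continuous_map_limit[OF assms(1) assms(3)] by (simp add: o_def)
  moreover have "(\<lambda>n. s n j) \<longlonglongrightarrow> t j"
    using continuous_map_limit[OF assms(2) assms(4)] by (simp add: o_def)
  ultimately show "t j = x j"
    by (rule LIMSEQ_unique[rotated])
qed

lemma FK_space_inclusion_continuous:
  assumes "FK_space TX" "FK_space TY" "topspace TX \<subseteq> topspace TY"
  shows "continuous_map TX TY (\<lambda>x. x)"
proof -
  have "\<And>j. continuous_map TX euclidean (\<lambda>x. x j)" "\<And>j. continuous_map TY euclidean (\<lambda>x. x j)"
    using assms(1,2) by (simp_all add: FK_space_def)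
  then have "F_space_closed_inclusion TX TY"
    using assms coordinatewise_limits_eq
    by (intro F_space_closed_inclusion.intro F_space_inclusion.intro F_space_inclusion_axioms.intro
        F_space_closed_inclusion_axioms.intro FK_space_imp_F_space) blast+
  then show ?thesis
    by (rule F_space_closed_inclusion.continuous_map_inclusion)
qed

lemma FK_dual_antimono:
  assumes "continuous_map TX TY (\<lambda>x. x)" "topspace TX \<subseteq> topspace TY"
  shows "FK_dual TY \<subseteq> FK_dual TX"
proof
  fix f assume f: "f \<in> FK_dual TY"
  then have "continuous_map TY euclidean f"
    by (simp add: FK_dual_def)
  from continuous_map_compose[OF assms(1) this] have "continuous_map TX euclidean f"
    by (simp add: o_def)
  with f assms(2) show "f \<in> FK_dual TX"
    unfolding FK_dual_def by blast
qed

lemma DS_mono: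
  assumes "continuous_map TX TY (\<lambda>x. x)" "topspace TX \<subseteq> topspace TY"
  shows "DS p q TX \<subseteq> DS p q TY"
proof
  fix x assume "x \<in> DS p q TX"
  then have "x \<in> topspace TX" "limitin TX (\<lambda>n. Tmean p q n x) x sequentially"
    by (simp_all add: DS_def)
  with continuous_map_limit[OF assms(1)] assms(2) show "x \<in> DS p q TY"
    by (fastforce simp: DS_def o_def)
qed

theorem mainTheorem7:
  fixes p q :: "nat \<Rightarrow> nat" and TX TY :: "(nat \<Rightarrow> complex) topology"
  assumes "\<And>n. p n < q n"
    and "filterlim q at_top sequentially"
    and "FK_space TX" and "FK_space TY"
    and "topspace TX \<subseteq> topspace TY"
    and "phi \<subseteq> topspace TX"
  shows "DS p q TX \<subseteq> DS p q TY \<and> DW p q TX \<subseteq> DW p q TY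
       \<and> DF p q TX \<subseteq> DF p q TY \<and> DFplus p q TX \<subseteq> DFplus p q TY
       \<and> DB p q TX \<subseteq> DB p q TY \<and> DBplus p q TX \<subseteq> DBplus p q TY"
proof -
  have incl: "continuous_map TX TY (\<lambda>x. x)"
    using FK_space_inclusion_continuous assms(3-5) .
  then have "FK_dual TY \<subseteq> FK_dual TX"
    using FK_dual_antimono assms(5) by blast
  with DS_mono[OF incl assms(5)] assms(5) show ?thesis
    unfolding DW_def DF_def DFplus_def DB_def DBplus_def by blast
qed

end
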